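(* Let $\varrho$ be a normalized proximate order of order $\rho>0$ and let $f(x)=\sum_{\ell=0}^\infty x^\ell a_\ell\in\mathcal{SM}_L(\mathbb{R}^{n+1})$. Then the following are equivalent: (1) $f\in A_\varrho$; (2) $\limsup_{r\to\infty}\frac{\sup_{|x|\le r}\ln|f(x)|}{r^{\varrho(r)}}<\infty$; (3) $\limsup_{\ell\to\infty}|a_\ell|^{1/\ell}\varphi(\ell)<\infty$; (4) $\inf\{\beta>0:f\in A_{\varrho,\beta}\}<\infty$.
   Context: $\mathbb{R}_n$ is the real Clifford algebra generated by $e_1,\dots,e_n$ with $e_ie_j=-e_je_i$ ($i\ne j$), $e_i^2=-1$, with Euclidean norm $|a|^2=\sum_Aa_A^2$. Paravectors $x=x_0+\sum x_\ell e_\ell$ are identified with $\mathbb{R}^{n+1}$; $\mathbb{S}=\{\sum x_\ell e_\ell:\sum x_\ell^2=1\}$. $\mathcal{SM}_L(\mathbb{R}^{n+1})$ is the set of entire left slice monogenic functions: $f(u+jv)=f_0(u,v)+jf_1(u,v)$ for all $u,v\in\mathbb{R}$, $j\in\mathbb{S}$, with $f_0,f_1:\mathbb{R}^2\to\mathbb{R}_n$ continuously differentiable, $f_0$ even and $f_1$ odd in $v$, $\partial_uf_0=\partial_vf_1$, $\partial_vf_0=-\partial_uf_1$; each such $f$ equals its everywhere convergent series $\sum x^\ell a_\ell$, $a_\ell\in\mathbb{R}_n$. A proximate order is a differentiable $\varrho:[0,\infty)\to[0,\infty)$ with $\lim_{r\to\infty}\varrho(r)=\rho>0$ and $\lim_{r\to\infty}\varrho'(r)r\ln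 r=0$; normalized means $r\mapsto r^{\varrho(r)}$ is strictly increasing on $(0,\infty)$ and tends to $0$ as $r\to0^+$; $\varphi$ is the inverse of $r\mapsto r^{\varrho(r)}$. $A_{\varrho,\sigma}=\{f\in\mathcal{SM}_L(\mathbb{R}^{n+1}):\sup_x|f(x)|e^{-\sigma|x|^{\varrho(|x|)}}<\infty\}$ for $\sigma>0$, and $A_\varrho=\bigcup_{\sigma>0}A_{\varrho,\sigma}$. *)

theory Defs
  imports "HOL-Analysis.Analysis"
begin

text \<open>The real Clifford algebra R_n, n = CARD('n), with generators indexed by a finite
linearly ordered type 'n. An element is a real vector indexed by subsets A of 'n
(the coefficient of the basis blade e_A); the norm of real ^ ('n set) is exactly the
Euclidean norm sqrt (sum_A a_A^2).\<close>

type_synonym 'n clif = "real ^ ('n set)"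

definition csign :: "'n::{finite,linorder} set \<Rightarrow> 'n set \<Rightarrow> real" where
  "csign A B = (-1) ^ (card {(i, j). i \<in> A \<and> j \<in> B \<and> j < i} + card (A \<inter> B))"

definition cmul :: "'n::{finite,linorder} clif \<Rightarrow> 'n clif \<Rightarrow> 'n clif" where
  "cmul a b = (\<chi> C. \<Sum>A\<in>UNIV. \<Sum>B\<in>UNIV.
      if (A - B) \<union> (B - A) = C then csign A B * (a $ A) * (b $ B) else 0)"

definition creal :: "real \<Rightarrow> 'n::{finite,linorder} clif" where
  "creal r = (\<chi> A. if A = {} then r else 0)"

primrec cpow :: "'n::{finite,linorder} clif \<Rightarrow> nat \<Rightarrow> 'n clif" where
  "cpow x 0 = creal 1"
| "cpow x (Suc k) = cmul x (cpow x k)"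

text \<open>Paravectors x_0 + sum x_l e_l (identified with R^(n+1)).\<close>
definition paravec :: "'n::{finite,linorder} clif \<Rightarrow> bool" where
  "paravec x \<longleftrightarrow> (\<forall>A. 1 < card A \<longrightarrow> x $ A = 0)"

definition csphere :: "'n::{finite,linorder} clif set" where
  "csphere = {j. paravec j \<and> j $ {} = 0 \<and> norm j = 1}"

text \<open>Entire left slice monogenic functions.  f0, f1 are continuously differentiable
on R^2 (written out: Frechet differentiable everywhere with continuous partial derivatives).\<close>
definition SM_L :: "('n::{finite,linorder} clif \<Rightarrow> 'n clif) set" where
  "SM_L = {f. \<exists>(f0 :: real \<times> real \<Rightarrow> 'n clif) f1 D0 D1.
      (\<forall>z. (f0 has_derivative D0 z) (at z)) \<and> (\<forall>z. (f1 has_derivative D1 z) (at z)) \<and>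
      continuous_on UNIV (\<lambda>z. D0 z (1, 0)) \<and> continuous_on UNIV (\<lambda>z. D0 z (0, 1)) \<and>
      continuous_on UNIV (\<lambda>z. D1 z (1, 0)) \<and> continuous_on UNIV (\<lambda>z. D1 z (0, 1)) \<and>
      (\<forall>u v. f0 (u, - v) = f0 (u, v)) \<and> (\<forall>u v. f1 (u, - v) = - f1 (u, v)) \<and>
      (\<forall>z. D0 z (1, 0) = D1 z (0, 1)) \<and> (\<forall>z. D0 z (0, 1) = - D1 z (1, 0)) \<and>
      (\<forall>u v j. j \<in> csphere \<longrightarrow> f (creal u + v *\<^sub>R j) = f0 (u, v) + cmul j (f1 (u, v)))}"

definition proximate_order :: "(real \<Rightarrow> real) \<Rightarrow> real \<Rightarrow> bool" where
  "proximate_order \<rho>r \<rho> \<longleftrightarrow>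
     (\<forall>r\<ge>0. \<rho>r differentiable (at r within {0..}) \<and> 0 \<le> \<rho>r r) \<and>
     0 < \<rho> \<and> (\<rho>r \<longlongrightarrow> \<rho>) at_top \<and>
     ((\<lambda>r. deriv \<rho>r r * r * ln r) \<longlongrightarrow> 0) at_top"

definition normalized_po :: "(real \<Rightarrow> real) \<Rightarrow> bool" where
  "normalized_po \<rho>r \<longleftrightarrow> strict_mono_on {0<..} (\<lambda>r. r powr \<rho>r r) \<and>
     ((\<lambda>r. r powr \<rho>r r) \<longlongrightarrow> 0) (at_right 0)"

definition po_inv :: "(real \<Rightarrow> real) \<Rightarrow> real \<Rightarrow> real" where
  "po_inv \<rho>r t = (THE r. 0 < r \<and> r powr \<rho>r r = t)"

definition A_rs :: "(real \<Rightarrow> real) \<Rightarrow> real \<Rightarrow> ('n::{finite,linorder} clif \<Rightarrow> 'n clif) set" where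
  "A_rs \<rho>r \<sigma> = {f. f \<in> SM_L \<and>
     (\<exists>C. \<forall>x. paravec x \<longrightarrow> norm (f x) * exp (- \<sigma> * norm x powr \<rho>r (norm x)) \<le> C)}"

definition A_r :: "(real \<Rightarrow> real) \<Rightarrow> ('n::{finite,linorder} clif \<Rightarrow> 'n clif) set" where
  "A_r \<rho>r = (\<Union>\<sigma>\<in>{0<..}. A_rs \<rho>r \<sigma>)"

definition maxmod :: "('n::{finite,linorder} clif \<Rightarrow> 'n clif) \<Rightarrow> real \<Rightarrow> real" where
  "maxmod f r = Sup {norm (f x) | x. paravec x \<and> norm x \<le> r}"

end

(* On a slice R + R e_k the paravector series sum x^l a_l becomes, after pairing each
   coordinate of a Clifford number with the corresponding coordinate of its product by -e_k,
   a family of entire power series in one complex variable.  If |f x| <= C exp (sigma |x|^rho(|x|)),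
   Cauchy's estimate on the circle of radius phi(l), where r^rho(r) = l, bounds |a_l| by a
   constant times (e^sigma / phi(l))^l; this is (1) => (3).
   Conversely, the derivative of u -> rho(e^u) u = ln (e^u)^rho(e^u) tends to rho, so on large
   scales ln r^rho(r) grows between rho/2 and 3 rho/2 times ln r (Potter bounds).  Since
   l = phi(l)^rho(phi(l)), this gives l ln (K r / phi(l)) <= c + sigma r^rho(r), and a coefficient
   bound |a_l| <= (K / phi(l))^l makes the series O(exp (sigma r^rho(r))); this is (3) => (1).
   Condition (2) is (1) read through the maximum modulus, and (4) just says that f lies in
   some A_{rho,beta}. *)

theory Submission
  imports Defs "HOL-Complex_Analysis.Cauchy_Integral_Formula"
begin

lemma sum_eq_single:
  assumes "finite A" "a \<in> A" "\<And>x. x \<in> A \<Longrightarrow> x \<noteq> a \<Longrightarrow> g x = 0"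
  shows "sum g A = g a"
  using sum.mono_neutral_right[of A "{a}" g] assms by auto

lemma norm_sums_le_geometric:
  fixes g :: "nat \<Rightarrow> 'a::banach"
  assumes "g sums s" and "\<And>l. norm (g l) \<le> M * (1/2) ^ l"
  shows "norm s \<le> 2 * M"
proof -
  have "(\<lambda>l. M * (1/2) ^ l) sums (M * 2)"
    using sums_mult[OF geometric_sums[of "1/2 :: real"], of M] by simp
  then show ?thesis
    using norm_sums_le[OF assms(1) _ assms(2)] by (simp add: mult.commute)
qed

lemma Limsup_ereal_less_infinity_iff:
  "Limsup F (\<lambda>x. ereal (g x)) < \<infinity> \<longleftrightarrow> (\<exists>B. eventually (\<lambda>x. g x \<le> B) F)"
proof
  assume "Limsup F (\<lambda>x. ereal (g x)) < \<infinity>"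
  then obtain n :: nat where "Limsup F (\<lambda>x. ereal (g x)) < ereal (real n)"
    using less_PInf_Ex_of_nat by auto
  then have "eventually (\<lambda>x. ereal (g x) < ereal (real n)) F"
    by (rule Limsup_lessD)
  then show "\<exists>B. eventually (\<lambda>x. g x \<le> B) F"
    by (auto intro!: exI[of _ "real n"] elim!: eventually_mono)
next
  assume "\<exists>B. eventually (\<lambda>x. g x \<le> B) F"
  then obtain B where "eventually (\<lambda>x. ereal (g x) \<le> ereal B) F"
    by (auto elim!: eventually_mono)
  then have "Limsup F (\<lambda>x. ereal (g x)) \<le> ereal B"
    by (rule Limsup_bounded)
  then show "Limsup F (\<lambda>x. ereal (g x)) < \<infinity>"
    using order.strict_trans1 by fastforce
qed

lemma eventually_sequentially_le_imp_bounded: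
  fixes g :: "nat \<Rightarrow> 'a::linorder"
  assumes "eventually (\<lambda>l. g l \<le> B) sequentially"
  obtains K where "\<And>l. g l \<le> K"
proof -
  obtain N where N: "\<And>l. N \<le> l \<Longrightarrow> g l \<le> B"
    using assms by (auto simp: eventually_sequentially)
  have "g l \<le> Max (insert B (g ` {..<N}))" for l
    using N[of l] by (cases "N \<le> l") (auto intro: order_trans[OF _ Max_ge])
  then show thesis
    by (rule that)
qed

lemma powr_inverse_le_of_le_power:
  fixes y q D :: real
  assumes "0 \<le> y" "y \<le> D * q ^ l" "0 < q" "1 \<le> l"
  shows "y powr (1 / real l) \<le> max 1 D * q"
proof -
  have "0 \<le> D * q ^ l"
    using assms by linarith
  then have "0 \<le> D"
    using mult_neg_pos[of D "q ^ l"] \<open>0 < q\<close> by fastforce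
  have "y powr (1 / real l) \<le> (D * q ^ l) powr (1 / real l)"
    using assms by (intro powr_mono2) auto
  also have "\<dots> = D powr (1 / real l) * q"
    using \<open>0 \<le> D\<close> \<open>0 < q\<close> \<open>1 \<le> l\<close>
    by (simp add: powr_mult powr_realpow[symmetric] powr_powr)
  also have "D powr (1 / real l) \<le> max 1 D"
  proof (cases "D \<le> 1")
    case True
    then show ?thesis
      using \<open>0 \<le> D\<close> powr_le1[of "1 / real l" D] by simp
  next
    case False
    then show ?thesis
      using powr_mono[of "1 / real l" 1 D] \<open>1 \<le> l\<close> by simp
  qed
  finally show ?thesis
    using \<open>0 < q\<close> by (simp add: mult_right_mono)
qed

lemma le_power_of_powr_inverse_le:
  fixes y q :: real
  assumes "0 \<le> y" "1 \<le> l" "y powr (1 / real l) \<le> q"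
  shows "y \<le> q ^ l"
proof -
  have "y = (y powr (1 / real l)) ^ l"
    using assms by (cases "y = 0") (simp_all add: powr_realpow[symmetric] powr_powr)
  also have "\<dots> \<le> q ^ l"
    using assms by (intro power_mono) auto
  finally show ?thesis .
qed

lemma ln_div_le_of_le_mult_exp:
  fixes m C \<sigma> V :: real
  assumes "0 \<le> m" "m \<le> C * exp (\<sigma> * V)" "1 \<le> V" "0 \<le> \<sigma>"
  shows "ln m / V \<le> \<bar>ln C\<bar> + \<sigma>"
proof (cases "m = 0")
  case False
  with assms have "0 < m"
    by simp
  with assms(2) have "0 < C * exp (\<sigma> * V)"
    by linarith
  then have "0 < C"
    by (simp add: zero_less_mult_iff)
  have "ln m \<le> ln (C * exp (\<sigma> * V))"
    using \<open>0 < m\<close> \<open>0 < C\<close> assms(2) by simp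
  also have "\<dots> = ln C + \<sigma> * V"
    using \<open>0 < C\<close> by (simp add: ln_mult)
  finally have "ln m / V \<le> ln C / V + \<sigma>"
    using \<open>1 \<le> V\<close> by (simp add: field_simps)
  also have "ln C / V \<le> \<bar>ln C\<bar> / V"
    using \<open>1 \<le> V\<close> by (intro divide_right_mono) auto
  also have "\<bar>ln C\<bar> / V \<le> \<bar>ln C\<bar>"
    using \<open>1 \<le> V\<close> mult_left_mono[OF \<open>1 \<le> V\<close>, of "\<bar>ln C\<bar>"] by (simp add: divide_le_eq)
  finally show ?thesis
    by simp
qed (use assms in simp)

lemma DERIV_bounds_imp_increment_bounds:
  fixes k :: "real \<Rightarrow> real"
  assumes "u \<le> v"
    and deriv: "\<And>x. u \<le> x \<Longrightarrow> x \<le> v \<Longrightarrow> \<exists>d. (k has_real_derivative d) (at x) \<and> a \<le> d \<and> d \<le> b"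
  shows "a * (v - u) \<le> k v - k u" and "k v - k u \<le> b * (v - u)"
proof -
  have "k u - a * u \<le> k v - a * v"
  proof (rule DERIV_nonneg_imp_nondecreasing[OF \<open>u \<le> v\<close>])
    fix x assume "u \<le> x" "x \<le> v"
    then obtain d where "(k has_real_derivative d) (at x)" "a \<le> d"
      using deriv by blast
    then show "\<exists>y. ((\<lambda>w. k w - a * w) has_real_derivative y) (at x) \<and> 0 \<le> y"
      by (auto intro!: exI[of _ "d - a"] derivative_eq_intros)
  qed
  then show "a * (v - u) \<le> k v - k u"
    by (simp add: algebra_simps)
  have "b * u - k u \<le> b * v - k v"
  proof (rule DERIV_nonneg_imp_nondecreasing[OF \<open>u \<le> v\<close>])
    fix x assume "u \<le> x" "x \<le> v"
    then obtain d where "(k has_real_derivative d) (at x)" "d \<le> b"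
      using deriv by blast
    then show "\<exists>y. ((\<lambda>w. b * w - k w) has_real_derivative y) (at x) \<and> 0 \<le> y"
      by (auto intro!: exI[of _ "b - d"] derivative_eq_intros)
  qed
  then show "k v - k u \<le> b * (v - u)"
    by (simp add: algebra_simps)
qed

lemma Cauchy_coeff_bound:
  fixes c :: "nat \<Rightarrow> complex"
  assumes summable: "\<And>w. summable (\<lambda>n. c n * w ^ n)" and "0 < r"
    and bound: "\<And>w. cmod w = r \<Longrightarrow> cmod (\<Sum>n. c n * w ^ n) \<le> M"
  shows "cmod (c n) \<le> M / r ^ n"
proof -
  define F where "F = Abs_fps c"
  have "conv_radius c \<ge> \<infinity>"
    by (rule conv_radius_geI_ex') (use summable in auto)
  then have radius: "fps_conv_radius F = \<infinity>"
    by (simp add: F_def fps_conv_radius_def)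
  then have holo: "eval_fps F holomorphic_on UNIV"
    by (intro holomorphic_on_eval_fps) simp
  have "cmod ((deriv ^^ n) (eval_fps F) 0) \<le> fact n * M / r ^ n"
  proof (rule Cauchy_inequality)
    show "eval_fps F holomorphic_on ball 0 r"
      using holo by (rule holomorphic_on_subset) simp
    show "continuous_on (cball 0 r) (eval_fps F)"
      using holo holomorphic_on_imp_continuous_on continuous_on_subset by blast
    show "cmod (eval_fps F w) \<le> M" if "cmod (0 - w) = r" for w
      using bound[of w] that by (simp add: F_def eval_fps_def)
  qed fact
  moreover have "fps_nth F n = (deriv ^^ n) (eval_fps F) 0 / fact n"
    by (rule fps_nth_fps_expansion[OF eval_fps_has_fps_expansion]) (simp add: radius)
  moreover have "cmod (fact n * c n) = fact n * cmod (c n)"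
    by (metis norm_mult norm_of_nat of_nat_fact)
  ultimately have "fact n * cmod (c n) \<le> fact n * (M / r ^ n)"
    by (simp add: F_def field_simps)
  then show ?thesis
    by (metis fact_gt_zero mult_le_cancel_left_pos)
qed

section \<open>The Clifford product\<close>

lemma cmul_nth:
  "cmul a b $ C = (\<Sum>A\<in>UNIV. \<Sum>B\<in>UNIV. (if sym_diff A B = C then csign A B else 0) * a $ A * b $ B)"
  by (auto simp: cmul_def intro!: sum.cong)

lemma abs_csign [simp]: "\<bar>csign A B\<bar> = 1"
  by (simp add: csign_def)

lemma csign_empty [simp]: "csign {} B = 1" "csign A {} = 1"
  by (simp_all add: csign_def)

lemma norm_cmul_le:
  "norm (cmul (p :: 'n::{finite,linorder} clif) q) \<le> norm p * norm q * real (CARD('n set)) ^ 3"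
proof -
  have "\<bar>(if sym_diff A B = C then csign A B else 0) * p $ A * q $ B\<bar> \<le> norm p * norm q"
    for A B C :: "'n set"
    using mult_mono[OF component_le_norm_cart[of p A] component_le_norm_cart[of q B]]
    by (simp add: abs_mult)
  then have "\<bar>cmul p q $ C\<bar> \<le> (\<Sum>A\<in>(UNIV :: 'n set set). \<Sum>B\<in>(UNIV :: 'n set set). norm p * norm q)"
    for C :: "'n set"
    unfolding cmul_nth by (intro order.trans[OF sum_abs] sum_mono)
  then have "norm (cmul p q) \<le> (\<Sum>C\<in>(UNIV :: 'n set set). \<Sum>A\<in>(UNIV :: 'n set set). \<Sum>B\<in>(UNIV :: 'n set set). norm p * norm q)"
    by (intro order.trans[OF norm_le_l1_cart] sum_mono)
  then show ?thesis
    by (simp add: power3_eq_cube mult_ac)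
qed

interpretation cmul: bounded_bilinear "cmul :: 'n::{finite,linorder} clif \<Rightarrow> 'n clif \<Rightarrow> 'n clif"
proof
  show "\<exists>K. \<forall>p q :: 'n clif. norm (cmul p q) \<le> norm p * norm q * K"
    using norm_cmul_le by blast
qed (simp_all add: vec_eq_iff cmul_nth algebra_simps sum.distrib sum_distrib_left)

lemma creal_nth: "creal t $ A = (if A = {} then t else 0)"
  by (simp add: creal_def)

lemma cmul_creal_left [simp]: "cmul (creal t) b = t *\<^sub>R b"
proof (rule vec_eq_iff[THEN iffD2], intro allI)
  fix C
  have "cmul (creal t) b $ C = (\<Sum>B\<in>UNIV. (if sym_diff {} B = C then 1 else 0) * t * b $ B)"
    unfolding cmul_nth by (rule trans[OF sum_eq_single[of UNIV "{}"]]) (auto simp: creal_nth intro!: sum.cong)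
  also have "\<dots> = t * b $ C"
    by (subst sum_eq_single[of _ C]) auto
  finally show "cmul (creal t) b $ C = (t *\<^sub>R b) $ C"
    by simp
qed

lemma cmul_creal_right [simp]: "cmul b (creal t) = t *\<^sub>R b"
proof (rule vec_eq_iff[THEN iffD2], intro allI)
  fix C
  have "cmul b (creal t) $ C = (\<Sum>A\<in>UNIV. (if sym_diff A {} = C then 1 else 0) * b $ A * t)"
    unfolding cmul_nth by (intro sum.cong refl, subst sum_eq_single[of _ "{}"]) (auto simp: creal_nth)
  also have "\<dots> = t * b $ C"
    by (subst sum_eq_single[of _ C]) auto
  finally show "cmul b (creal t) $ C = (t *\<^sub>R b) $ C"
    by simp
qed

lemma scaleR_creal: "s *\<^sub>R creal t = creal (s * t)"
  by (simp add: vec_eq_iff creal_nth)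

lemma paravec_zero: "paravec 0"
  by (simp add: paravec_def)

lemma paravec_creal: "paravec (creal t)"
  by (auto simp: paravec_def creal_nth)

lemma cpow_creal: "cpow (creal t) l = creal (t ^ l)"
  by (induction l) (simp_all add: scaleR_creal mult.commute)

lemma norm_creal: "norm (creal t :: 'n::{finite,linorder} clif) = \<bar>t\<bar>"
proof -
  have "(\<Sum>A\<in>UNIV. ((creal t :: 'n clif) $ A)\<^sup>2) = (\<Sum>A\<in>(UNIV :: 'n set set). if A = {} then t\<^sup>2 else 0)"
    by (intro sum.cong) (auto simp: creal_nth)
  then show ?thesis
    by (simp add: norm_vec_def L2_set_def)
qed

lemma cmul_cpow_bound:
  obtains B :: real where "1 \<le> B"
    and "\<And>(x :: 'n::{finite,linorder} clif) l b. norm (cmul (cpow x l) b) \<le> B * (B * norm x) ^ l * norm b"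
proof -
  obtain K where K: "\<And>p q :: 'n clif. norm (cmul p q) \<le> norm p * norm q * K"
    using cmul.bounded by blast
  define B where "B = max 1 K"
  have "1 \<le> B"
    by (simp add: B_def)
  have KB: "norm (cmul p q) \<le> norm p * norm q * B" for p q :: "'n clif"
    using K[of p q] mult_left_mono[of K B "norm p * norm q"] by (simp add: B_def)
  have pow: "norm (cpow x l) \<le> (B * norm x) ^ l" for x :: "'n clif" and l
  proof (induction l)
    case 0
    show ?case by (simp add: norm_creal)
  next
    case (Suc l)
    have "norm (cpow x (Suc l)) \<le> norm x * norm (cpow x l) * B"
      using KB by simp
    also have "\<dots> \<le> norm x * (B * norm x) ^ l * B"
      using Suc.IH \<open>1 \<le> B\<close> by (intro mult_right_mono mult_left_mono) auto
    finally show ?case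
      by (simp add: algebra_simps)
  qed
  show thesis
  proof (rule that[OF \<open>1 \<le> B\<close>])
    fix x :: "'n clif" and l b
    have "norm (cmul (cpow x l) b) \<le> norm (cpow x l) * norm b * B"
      by (rule KB)
    also have "\<dots> \<le> (B * norm x) ^ l * norm b * B"
      using pow \<open>1 \<le> B\<close> by (intro mult_right_mono) auto
    finally show "norm (cmul (cpow x l) b) \<le> B * (B * norm x) ^ l * norm b"
      by (simp add: mult_ac)
  qed
qed

section \<open>Complex slices\<close>

definition cgen :: "'n::{finite,linorder} \<Rightarrow> 'n clif" where
  "cgen k = (\<chi> A. if A = {k} then 1 else 0)"

lemma cmul_cgen_nth: "cmul (cgen k) b $ C = csign {k} (sym_diff C {k}) * b $ sym_diff C {k}"
proof -
  have "cmul (cgen k) b $ C = (\<Sum>B\<in>UNIV. (if sym_diff {k} B = C then csign {k} B else 0) * b $ B)"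
    unfolding cmul_nth by (subst sum_eq_single[of _ "{k}"]) (auto simp: cgen_def)
  also have "\<dots> = csign {k} (sym_diff C {k}) * b $ sym_diff C {k}"
    by (subst sum_eq_single[of _ "sym_diff C {k}"]) auto
  finally show ?thesis .
qed

lemma csign_cgen_twice: "csign {k} (sym_diff C {k}) * csign {k} C = -1"
proof -
  define m where "m = card {(i, j). i \<in> {k} \<and> j \<in> C \<and> j < i}"
  have same_inversions:
    "{(i, j). i \<in> {k} \<and> j \<in> sym_diff C {k} \<and> j < i} = {(i, j). i \<in> {k} \<and> j \<in> C \<and> j < i}"
    by auto
  have "card ({k} \<inter> sym_diff C {k}) + card ({k} \<inter> C) = 1"
    by (cases "k \<in> C") auto
  then have "m + card ({k} \<inter> sym_diff C {k}) + (m + card ({k} \<inter> C)) = 2 * m + 1"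
    by simp
  then show ?thesis
    unfolding csign_def same_inversions m_def[symmetric] power_add[symmetric] by (simp only:) simp
qed

lemma cmul_cgen_cgen: "cmul (cgen k) (cmul (cgen k) b) = - b"
proof -
  have "sym_diff (sym_diff C {k}) {k} = C" for C :: "'a set"
    by blast
  then show ?thesis
    by (simp add: vec_eq_iff cmul_cgen_nth mult.assoc[symmetric] csign_cgen_twice)
qed

definition cslice :: "'n::{finite,linorder} \<Rightarrow> complex \<Rightarrow> 'n clif" where
  "cslice k w = creal (Re w) + Im w *\<^sub>R cgen k"

lemma cslice_nth: "cslice k w $ A = (if A = {} then Re w else if A = {k} then Im w else 0)"
  by (auto simp: cslice_def creal_nth cgen_def)

lemma cslice_of_real: "cslice k (complex_of_real t) = creal t"
  by (simp add: cslice_def)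

lemma paravec_cslice: "paravec (cslice k w)"
  by (auto simp: paravec_def cslice_nth)

lemma norm_cslice: "norm (cslice k w) = cmod w"
proof -
  have "(\<Sum>A\<in>UNIV. (cslice k w $ A)\<^sup>2) =
        (\<Sum>A\<in>UNIV. (if A = {} then (Re w)\<^sup>2 else 0) + (if A = {k} then (Im w)\<^sup>2 else 0))"
    by (intro sum.cong) (auto simp: cslice_nth)
  then show ?thesis
    by (simp add: norm_vec_def L2_set_def cmod_def sum.distrib)
qed

lemma cmul_cslice_left: "cmul (cslice k z) b = Re z *\<^sub>R b + Im z *\<^sub>R cmul (cgen k) b"
  by (simp add: cslice_def cmul.add_left cmul.scaleR_left)

lemma cmul_cslice_cslice: "cmul (cslice k w) (cslice k z) = cslice k (w * z)"
proof -
  have gen: "cmul (cgen k) (cslice k z) = Re z *\<^sub>R cgen k - Im z *\<^sub>R creal 1"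
    using cmul_cgen_cgen[of k "creal 1"] by (simp add: cslice_def cmul.add_right cmul.scaleR_right)
  show ?thesis
    unfolding cmul_cslice_left gen
    by (auto simp: vec_eq_iff cslice_nth creal_nth cgen_def algebra_simps)
qed

lemma cpow_cslice: "cpow (cslice k w) l = cslice k (w ^ l)"
  by (induction l) (simp_all add: cslice_of_real[of k 1, simplified] cmul_cslice_cslice)

(* Since e_k e_k = -1, left multiplication by cslice k z acts on these complex coordinates
   as multiplication by z. *)
definition ccomp :: "'n::{finite,linorder} set \<Rightarrow> 'n \<Rightarrow> 'n clif \<Rightarrow> complex" where
  "ccomp C k b = Complex (b $ C) (- (cmul (cgen k) b $ C))"

lemma bounded_linear_ccomp: "bounded_linear (ccomp C k)"
  by (rule linear_conv_bounded_linear[THEN iffD1], rule linearI)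
    (simp_all add: ccomp_def cmul.add_right cmul.scaleR_right complex_eq_iff)

lemma ccomp_cmul_cslice: "ccomp C k (cmul (cslice k z) b) = z * ccomp C k b"
  by (simp add: ccomp_def cmul_cslice_left cmul.add_right cmul.scaleR_right cmul_cgen_cgen
      complex_eq_iff algebra_simps)

lemma norm_ccomp_le: "cmod (ccomp C k b) \<le> 2 * norm b"
proof -
  have "cmod (ccomp C k b) \<le> \<bar>b $ C\<bar> + \<bar>b $ sym_diff C {k}\<bar>"
    using cmod_le[of "ccomp C k b"] by (simp add: ccomp_def cmul_cgen_nth abs_mult)
  also have "\<dots> \<le> 2 * norm b"
    using component_le_norm_cart[of b C] component_le_norm_cart[of b "sym_diff C {k}"] by simp
  finally show ?thesis .
qed

lemma norm_le_sum_ccomp: "norm b \<le> (\<Sum>C\<in>UNIV. cmod (ccomp C k b))"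
proof -
  have "\<bar>b $ C\<bar> \<le> cmod (ccomp C k b)" for C
    using abs_Re_le_cmod[of "ccomp C k b"] by (simp add: ccomp_def)
  then show ?thesis
    by (intro order.trans[OF norm_le_l1_cart] sum_mono)
qed

section \<open>Power series on paravectors\<close>

definition paravec_power_series :: "(nat \<Rightarrow> 'n::{finite,linorder} clif) \<Rightarrow> ('n clif \<Rightarrow> 'n clif) \<Rightarrow> bool" where
  "paravec_power_series a f \<longleftrightarrow> (\<forall>x. paravec x \<longrightarrow> (\<lambda>l. cmul (cpow x l) (a l)) sums f x)"

lemma paravec_power_series_slice:
  assumes "paravec_power_series a f"
  shows "(\<lambda>l. ccomp C k (a l) * w ^ l) sums ccomp C k (f (cslice k w))"
proof -
  have "(\<lambda>l. cmul (cpow (cslice k w) l) (a l)) sums f (cslice k w)"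
    using assms paravec_cslice by (auto simp: paravec_power_series_def)
  from bounded_linear.sums[OF bounded_linear_ccomp this, of C k] show ?thesis
    by (simp add: cpow_cslice ccomp_cmul_cslice mult.commute)
qed

lemma paravec_power_series_coeff_bounded:
  assumes "paravec_power_series a f"
  obtains D where "\<And>l. norm (a l) * R ^ l \<le> D"
proof -
  have "(\<lambda>l. cmul (cpow (creal R) l) (a l)) sums f (creal R)"
    using assms paravec_creal by (auto simp: paravec_power_series_def)
  then have "(\<lambda>l. R ^ l *\<^sub>R a l) \<longlonglongrightarrow> 0"
    by (intro summable_LIMSEQ_zero) (simp add: cpow_creal sums_iff)
  then have "Bseq (\<lambda>l. R ^ l *\<^sub>R a l)"
    by (rule convergent_imp_Bseq[OF convergentI])
  then obtain D where D: "\<And>l. norm (R ^ l *\<^sub>R a l) \<le> D"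
    unfolding Bseq_def by blast
  show thesis
  proof (rule that)
    fix l
    have "norm (a l) * R ^ l \<le> norm (R ^ l *\<^sub>R a l)"
      using mult_left_mono[OF abs_ge_self[of "R ^ l"] norm_ge_zero[of "a l"]] by (simp add: mult.commute)
    then show "norm (a l) * R ^ l \<le> D"
      using D order_trans by blast
  qed
qed

lemma paravec_power_series_bounded:
  fixes a :: "nat \<Rightarrow> 'n::{finite,linorder} clif"
  assumes "paravec_power_series a f"
  obtains M where "\<And>x. paravec x \<Longrightarrow> norm x \<le> r \<Longrightarrow> norm (f x) \<le> M"
proof -
  obtain B where "1 \<le> B"
    and B: "\<And>x :: 'n clif. \<And>l b. norm (cmul (cpow x l) b) \<le> B * (B * norm x) ^ l * norm b"
    using cmul_cpow_bound by blast
  obtain D where D: "\<And>l. norm (a l) * (2 * B * r) ^ l \<le> D"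
    using paravec_power_series_coeff_bounded[OF assms] by blast
  show thesis
  proof (rule that)
    fix x :: "'n clif"
    assume x: "paravec x" "norm x \<le> r"
    have terms: "norm (cmul (cpow x l) (a l)) \<le> B * D * (1/2) ^ l" for l
    proof -
      have "norm (cmul (cpow x l) (a l)) \<le> B * (B * norm x) ^ l * norm (a l)"
        by (rule B)
      also have "\<dots> \<le> B * (B * r) ^ l * norm (a l)"
        using x \<open>1 \<le> B\<close> by (intro mult_right_mono mult_left_mono power_mono) auto
      also have "\<dots> = B * (1/2) ^ l * (norm (a l) * (2 * B * r) ^ l)"
        by (simp add: field_simps)
      also have "\<dots> \<le> B * (1/2) ^ l * D"
        using D \<open>1 \<le> B\<close> by (intro mult_left_mono) auto
      finally show ?thesis
        by (simp add: mult_ac)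
    qed
    have "(\<lambda>l. cmul (cpow x l) (a l)) sums f x"
      using assms x(1) by (simp add: paravec_power_series_def)
    then show "norm (f x) \<le> 2 * (B * D)"
      using terms by (rule norm_sums_le_geometric)
  qed
qed

lemma paravec_power_series_coeff_le:
  fixes a :: "nat \<Rightarrow> 'n::{finite,linorder} clif"
  assumes series: "paravec_power_series a f" and "0 < r"
    and bound: "\<And>x. paravec x \<Longrightarrow> norm x = r \<Longrightarrow> norm (f x) \<le> M"
  shows "norm (a l) \<le> real CARD('n set) * (2 * M / r ^ l)"
proof -
  fix k :: 'n \<comment> \<open>any imaginary unit e_k will do\<close>
  have "cmod (ccomp C k (a l)) \<le> 2 * M / r ^ l" for C
  proof (rule Cauchy_coeff_bound)
    show "summable (\<lambda>n. ccomp C k (a n) * w ^ n)" for w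
      using paravec_power_series_slice[OF series] by (rule sums_summable)
    show "cmod (\<Sum>n. ccomp C k (a n) * w ^ n) \<le> 2 * M" if "cmod w = r" for w
    proof -
      have "(\<Sum>n. ccomp C k (a n) * w ^ n) = ccomp C k (f (cslice k w))"
        using paravec_power_series_slice[OF series] by (rule sums_unique[symmetric])
      also have "cmod \<dots> \<le> 2 * norm (f (cslice k w))"
        by (rule norm_ccomp_le)
      also have "\<dots> \<le> 2 * M"
        using bound[OF paravec_cslice] that by (simp add: norm_cslice)
      finally show ?thesis .
    qed
  qed fact
  then have "(\<Sum>C\<in>UNIV. cmod (ccomp C k (a l))) \<le> (\<Sum>C\<in>(UNIV :: 'n set set). 2 * M / r ^ l)"
    by (intro sum_mono)
  then show ?thesis
    using norm_le_sum_ccomp[of "a l" k] by simp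
qed

lemma maxmod_upper:
  assumes "\<And>y. paravec y \<Longrightarrow> norm y \<le> r \<Longrightarrow> norm (f y) \<le> M" and "paravec x" "norm x \<le> r"
  shows "norm (f x) \<le> maxmod f r"
  unfolding maxmod_def by (rule cSup_upper) (use assms in \<open>auto simp: bdd_above_def\<close>)

lemma maxmod_least:
  assumes "0 \<le> r" and "\<And>y. paravec y \<Longrightarrow> norm y \<le> r \<Longrightarrow> norm (f y) \<le> M"
  shows "maxmod f r \<le> M"
  unfolding maxmod_def using assms paravec_zero by (intro cSup_least) auto

lemma paravec_power_series_norm_le_maxmod:
  assumes "paravec_power_series a f" and "paravec x"
  shows "norm (f x) \<le> maxmod f (norm x)"
proof -
  obtain M where "\<And>y. paravec y \<Longrightarrow> norm y \<le> norm x \<Longrightarrow> norm (f y) \<le> M"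
    using paravec_power_series_bounded[OF assms(1)] by blast
  then show ?thesis
    using assms(2) by (rule maxmod_upper) simp_all
qed

section \<open>Proximate orders\<close>

lemma proximate_order_DERIV:
  assumes "proximate_order \<rho>r \<rho>" and "0 < r"
  shows "(\<rho>r has_real_derivative deriv \<rho>r r) (at r)"
proof -
  have "at r within {0..} = at r"
    by (rule at_within_open_subset[of _ "{0<..}"]) (use assms(2) in auto)
  moreover have "\<rho>r differentiable (at r within {0..})"
    using assms by (simp add: proximate_order_def)
  ultimately show ?thesis
    by (simp add: DERIV_deriv_iff_real_differentiable)
qed

lemma continuous_on_po_pow:
  assumes "proximate_order \<rho>r \<rho>"
  shows "continuous_on {0<..} (\<lambda>r. r powr \<rho>r r)"
proof -
  have "continuous_on {0<..} \<rho>r"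
    using proximate_order_DERIV[OF assms] DERIV_isCont
    by (intro continuous_at_imp_continuous_on) auto
  then show ?thesis
    by (intro continuous_intros) auto
qed

lemma po_pow_tendsto_at_top:
  assumes "proximate_order \<rho>r \<rho>"
  shows "filterlim (\<lambda>r. r powr \<rho>r r) at_top at_top"
proof -
  have "filterlim (\<lambda>r. \<rho>r r * ln r) at_top at_top"
    using assms ln_at_top by (intro filterlim_tendsto_pos_mult_at_top) (auto simp: proximate_order_def)
  then have "filterlim (\<lambda>r. exp (\<rho>r r * ln r)) at_top at_top"
    by (rule filterlim_compose[OF exp_at_top])
  moreover have "eventually (\<lambda>r. exp (\<rho>r r * ln r) = r powr \<rho>r r) at_top"
    using eventually_gt_at_top[of 0] by eventually_elim (simp add: powr_def)
  ultimately show ?thesis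
    using filterlim_cong by fastforce
qed

lemma po_pow_le_iff:
  assumes "normalized_po \<rho>r" and "0 < r" and "0 < s"
  shows "r powr \<rho>r r \<le> s powr \<rho>r s \<longleftrightarrow> r \<le> s"
  using assms strict_mono_on_less_eq[of "{0<..}" "\<lambda>r. r powr \<rho>r r"] by (auto simp: normalized_po_def)

lemma po_pow_mono:
  assumes "normalized_po \<rho>r" and "0 \<le> r" and "r \<le> s"
  shows "r powr \<rho>r r \<le> s powr \<rho>r s"
proof (cases "r = 0")
  case False
  with assms show ?thesis
    by (subst po_pow_le_iff) auto
qed simp

lemma po_inv_inverse:
  assumes po: "proximate_order \<rho>r \<rho>" and np: "normalized_po \<rho>r" and "0 < t"
  shows "0 < po_inv \<rho>r t" and "po_inv \<rho>r t powr \<rho>r (po_inv \<rho>r t) = t"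
proof -
  have "eventually (\<lambda>r. r powr \<rho>r r < t) (at_right 0)"
    using np \<open>0 < t\<close> by (intro order_tendstoD(2)) (auto simp: normalized_po_def)
  then obtain c where "0 < c" and c: "\<And>r. 0 < r \<Longrightarrow> r < c \<Longrightarrow> r powr \<rho>r r < t"
    unfolding eventually_at_right_field by auto
  define a where "a = c / 2"
  have "0 < a" "a powr \<rho>r a < t"
    using \<open>0 < c\<close> c[of a] by (simp_all add: a_def)
  have "eventually (\<lambda>r. t \<le> r powr \<rho>r r \<and> a \<le> r) at_top"
    using po_pow_tendsto_at_top[OF po] by (auto simp: filterlim_at_top intro: eventually_conj eventually_ge_at_top)
  then obtain b where "t \<le> b powr \<rho>r b" "a \<le> b"
    unfolding eventually_at_top_linorder by blast
  moreover have "continuous_on {a..b} (\<lambda>r. r powr \<rho>r r)"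
    using continuous_on_po_pow[OF po] by (rule continuous_on_subset) (use \<open>0 < a\<close> in auto)
  ultimately obtain x where "a \<le> x" and x: "x powr \<rho>r x = t"
    using IVT'[of "\<lambda>r. r powr \<rho>r r" a t b] \<open>a powr \<rho>r a < t\<close> by auto
  with \<open>0 < a\<close> have "0 < x"
    by simp
  have inj: "inj_on (\<lambda>r. r powr \<rho>r r) {0<..}"
    using np strict_mono_on_imp_inj_on by (auto simp: normalized_po_def)
  have "po_inv \<rho>r t = x"
    unfolding po_inv_def
  proof (rule the_equality)
    show "y = x" if "0 < y \<and> y powr \<rho>r y = t" for y
      using inj_onD[OF inj, of y x] that x \<open>0 < x\<close> by simp
  qed (use \<open>0 < x\<close> x in simp)
  with \<open>0 < x\<close> x show "0 < po_inv \<rho>r t" and "po_inv \<rho>r t powr \<rho>r (po_inv \<rho>r t) = t"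
    by simp_all
qed

lemma po_inv_mono:
  assumes po: "proximate_order \<rho>r \<rho>" and np: "normalized_po \<rho>r" and "0 < s" and "s \<le> t"
  shows "po_inv \<rho>r s \<le> po_inv \<rho>r t"
proof -
  have "0 < t"
    using assms by simp
  have "po_inv \<rho>r s powr \<rho>r (po_inv \<rho>r s) \<le> po_inv \<rho>r t powr \<rho>r (po_inv \<rho>r t)"
    using assms po_inv_inverse(2)[OF po np] \<open>0 < t\<close> by simp
  then show ?thesis
    by (subst (asm) po_pow_le_iff[OF np po_inv_inverse(1)[OF po np] po_inv_inverse(1)[OF po np]])
      (use assms \<open>0 < t\<close> in auto)
qed

lemma proximate_order_log_pow_deriv:
  assumes po: "proximate_order \<rho>r \<rho>"
  shows "eventually (\<lambda>u. \<exists>d. ((\<lambda>u. \<rho>r (exp u) * u) has_real_derivative d) (at u) \<and>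
           \<rho>/2 \<le> d \<and> d \<le> 3*\<rho>/2) at_top"
proof -
  have "0 < \<rho>" and "(\<rho>r \<longlongrightarrow> \<rho>) at_top" and "((\<lambda>r. deriv \<rho>r r * r * ln r) \<longlongrightarrow> 0) at_top"
    using po by (auto simp: proximate_order_def)
  then have "((\<lambda>u. \<rho>r (exp u)) \<longlongrightarrow> \<rho>) at_top" and "((\<lambda>u. deriv \<rho>r (exp u) * exp u * u) \<longlongrightarrow> 0) at_top"
    using filterlim_compose[OF _ exp_at_top] by fastforce+
  then have "eventually (\<lambda>u. \<bar>\<rho>r (exp u) - \<rho>\<bar> < \<rho>/4 \<and> \<bar>deriv \<rho>r (exp u) * exp u * u\<bar> < \<rho>/4) at_top"
    using \<open>0 < \<rho>\<close> by (auto intro!: eventually_conj dest!: tendstoD[where e = "\<rho>/4"] simp: dist_real_def)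
  then show ?thesis
  proof eventually_elim
    case (elim u)
    have "((\<lambda>u. \<rho>r (exp u) * u) has_real_derivative deriv \<rho>r (exp u) * exp u * u + \<rho>r (exp u)) (at u)"
      using DERIV_chain2[OF proximate_order_DERIV[OF po exp_gt_zero] DERIV_exp]
      by (auto intro!: derivative_eq_intros)
    moreover have "\<rho>/2 \<le> deriv \<rho>r (exp u) * exp u * u + \<rho>r (exp u)"
      and "deriv \<rho>r (exp u) * exp u * u + \<rho>r (exp u) \<le> 3*\<rho>/2"
      using elim unfolding abs_less_iff by linarith+
    ultimately show ?case
      by blast
  qed
qed

lemma proximate_order_potter:
  assumes po: "proximate_order \<rho>r \<rho>"
  obtains T where "1 \<le> T"
    and "\<And>t s. T \<le> t \<Longrightarrow> t \<le> s \<Longrightarrow> \<rho>/2 * ln (s / t) \<le> \<rho>r s * ln s - \<rho>r t * ln t"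
    and "\<And>t s. T \<le> t \<Longrightarrow> t \<le> s \<Longrightarrow> \<rho>r s * ln s - \<rho>r t * ln t \<le> 3*\<rho>/2 * ln (s / t)"
proof -
  define k where "k u = \<rho>r (exp u) * u" for u
  obtain U where U: "\<And>u. U \<le> u \<Longrightarrow> \<exists>d. (k has_real_derivative d) (at u) \<and> \<rho>/2 \<le> d \<and> d \<le> 3*\<rho>/2"
    using proximate_order_log_pow_deriv[OF po] unfolding k_def eventually_at_top_linorder by blast
  define T where "T = max 1 (exp U)"
  have "0 < T" "exp U \<le> T"
    by (auto simp: T_def)
  then have "U \<le> ln T"
    using ln_le_cancel_iff[of "exp U" T] by simp
  show thesis
  proof (rule that)
    show "1 \<le> T"
      by (simp add: T_def)
    fix t s assume "T \<le> t" "t \<le> s"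
    then have "0 < t" "0 < s" "ln T \<le> ln t" "ln t \<le> ln s"
      using \<open>1 \<le> T\<close> by auto
    then have "k (ln s) - k (ln t) = \<rho>r s * ln s - \<rho>r t * ln t" and "ln (s / t) = ln s - ln t"
      by (simp_all add: k_def ln_div)
    moreover have "\<exists>d. (k has_real_derivative d) (at x) \<and> \<rho>/2 \<le> d \<and> d \<le> 3*\<rho>/2" if "ln t \<le> x" for x
      using \<open>U \<le> ln T\<close> \<open>ln T \<le> ln t\<close> that by (intro U) linarith
    then have "\<rho>/2 * (ln s - ln t) \<le> k (ln s) - k (ln t)" "k (ln s) - k (ln t) \<le> 3*\<rho>/2 * (ln s - ln t)"
      using DERIV_bounds_imp_increment_bounds[OF \<open>ln t \<le> ln s\<close>] by blast+
    ultimately show "\<rho>/2 * ln (s / t) \<le> \<rho>r s * ln s - \<rho>r t * ln t"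
      and "\<rho>r s * ln s - \<rho>r t * ln t \<le> 3*\<rho>/2 * ln (s / t)"
      by simp_all
  qed
qed

lemma po_pow_scale_le:
  assumes po: "proximate_order \<rho>r \<rho>" and np: "normalized_po \<rho>r" and "1 \<le> c"
  obtains C where "\<And>r. 0 \<le> r \<Longrightarrow> (c * r) powr \<rho>r (c * r) \<le> C + c powr (3*\<rho>/2) * r powr \<rho>r r"
proof -
  obtain T where "1 \<le> T"
    and upper: "\<And>t s. T \<le> t \<Longrightarrow> t \<le> s \<Longrightarrow> \<rho>r s * ln s - \<rho>r t * ln t \<le> 3*\<rho>/2 * ln (s / t)"
    by (rule proximate_order_potter[OF po]) blast
  show thesis
  proof (rule that)
    fix r :: real assume "0 \<le> r"
    show "(c * r) powr \<rho>r (c * r) \<le> (c * T) powr \<rho>r (c * T) + c powr (3*\<rho>/2) * r powr \<rho>r r"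
    proof (cases "T \<le> r")
      case True
      then have "0 < r" "r \<le> c * r"
        using \<open>1 \<le> T\<close> \<open>1 \<le> c\<close> by auto
      have "\<rho>r (c * r) * ln (c * r) - \<rho>r r * ln r \<le> 3*\<rho>/2 * ln (c * r / r)"
        by (rule upper[OF True \<open>r \<le> c * r\<close>])
      then have "\<rho>r (c * r) * ln (c * r) \<le> 3*\<rho>/2 * ln c + \<rho>r r * ln r"
        using \<open>0 < r\<close> by simp
      then have "exp (\<rho>r (c * r) * ln (c * r)) \<le> exp (3*\<rho>/2 * ln c) * exp (\<rho>r r * ln r)"
        by (simp add: exp_add[symmetric])
      then have "(c * r) powr \<rho>r (c * r) \<le> c powr (3*\<rho>/2) * r powr \<rho>r r"
        using \<open>0 < r\<close> \<open>1 \<le> c\<close> by (simp add: powr_def)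
      then show ?thesis
        using powr_ge_zero[of "c * T" "\<rho>r (c * T)"] by linarith
    next
      case False
      then have "(c * r) powr \<rho>r (c * r) \<le> (c * T) powr \<rho>r (c * T)"
        using \<open>0 \<le> r\<close> \<open>1 \<le> c\<close> by (intro po_pow_mono[OF np]) auto
      moreover have "0 \<le> c powr (3*\<rho>/2) * r powr \<rho>r r"
        by simp
      ultimately show ?thesis
        by linarith
    qed
  qed
qed

lemma po_pow_log_ratio_le_at_top:
  assumes po: "proximate_order \<rho>r \<rho>"
  obtains T where "1 \<le> T"
    and "\<And>t s. T \<le> t \<Longrightarrow> 0 < s \<Longrightarrow> t powr \<rho>r t * ln (s / t) \<le> 2/\<rho> * s powr \<rho>r s"
proof -
  let ?V = "\<lambda>r. r powr \<rho>r r"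
  have "0 < \<rho>"
    using po by (simp add: proximate_order_def)
  obtain T where "1 \<le> T"
    and lower: "\<And>t s. T \<le> t \<Longrightarrow> t \<le> s \<Longrightarrow> \<rho>/2 * ln (s / t) \<le> \<rho>r s * ln s - \<rho>r t * ln t"
    by (rule proximate_order_potter[OF po]) blast
  show thesis
  proof (rule that[OF \<open>1 \<le> T\<close>])
    fix t s :: real assume "T \<le> t" "0 < s"
    then have "0 < t"
      using \<open>1 \<le> T\<close> by simp
    show "?V t * ln (s / t) \<le> 2/\<rho> * ?V s"
    proof (cases "t \<le> s")
      case True
      have "\<rho>/2 * ln (s / t) \<le> ln (?V s / ?V t)"
        using lower[OF \<open>T \<le> t\<close> True] \<open>0 < t\<close> \<open>0 < s\<close> by (simp add: ln_div)
      also have "\<dots> \<le> ?V s / ?V t"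
        using \<open>0 < t\<close> \<open>0 < s\<close> ln_le_minus_one[of "?V s / ?V t"] by simp
      finally show ?thesis
        using \<open>0 < t\<close> \<open>0 < \<rho>\<close> by (simp add: field_simps)
    next
      case False
      with \<open>0 < t\<close> \<open>0 < s\<close> have "?V t * ln (s / t) \<le> 0"
        by (intro mult_nonneg_nonpos) auto
      also have "0 \<le> 2/\<rho> * ?V s"
        using \<open>0 < \<rho>\<close> by simp
      finally show ?thesis .
    qed
  qed
qed

lemma po_pow_log_ratio_le:
  assumes po: "proximate_order \<rho>r \<rho>" and np: "normalized_po \<rho>r" and "0 < t\<^sub>0"
  obtains C where "\<And>t s. t\<^sub>0 \<le> t \<Longrightarrow> 0 < s \<Longrightarrow> t powr \<rho>r t * ln (s / t) \<le> C + 2/\<rho> * s powr \<rho>r s"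
proof -
  let ?V = "\<lambda>r. r powr \<rho>r r"
  have "0 < \<rho>"
    using po by (simp add: proximate_order_def)
  obtain T' where large': "\<And>t s. T' \<le> t \<Longrightarrow> 0 < s \<Longrightarrow> ?V t * ln (s / t) \<le> 2/\<rho> * ?V s"
    by (rule po_pow_log_ratio_le_at_top[OF po]) blast
  define T where "T = max T' t\<^sub>0"
  have "0 < T" "t\<^sub>0 \<le> T"
    using \<open>0 < t\<^sub>0\<close> by (auto simp: T_def)
  have large: "?V t * ln (s / t) \<le> 2/\<rho> * ?V s" if "T \<le> t" "0 < s" for t s
    using large' that by (simp add: T_def)
  have small: "?V t * ln (s / T) \<le> 2/\<rho> * ?V s" if "0 < t" "t \<le> T" "0 < s" for t s
  proof (cases "0 \<le> ln (s / T)")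
    case True
    have "?V t * ln (s / T) \<le> ?V T * ln (s / T)"
      using True that by (intro mult_right_mono po_pow_mono[OF np]) auto
    also have "\<dots> \<le> 2/\<rho> * ?V s"
      using large[of T s] that by simp
    finally show ?thesis .
  next
    case False
    then have "?V t * ln (s / T) \<le> 0"
      by (intro mult_nonneg_nonpos) auto
    also have "0 \<le> 2/\<rho> * ?V s"
      using \<open>0 < \<rho>\<close> by simp
    finally show ?thesis .
  qed
  show thesis
  proof (rule that)
    fix t s :: real assume "t\<^sub>0 \<le> t" "0 < s"
    then have "0 < t"
      using \<open>0 < t\<^sub>0\<close> by simp
    have "0 \<le> ?V T * ln (T / t\<^sub>0)"
      using \<open>t\<^sub>0 \<le> T\<close> \<open>0 < t\<^sub>0\<close> by simp
    show "?V t * ln (s / t) \<le> ?V T * ln (T / t\<^sub>0) + 2/\<rho> * ?V s"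
    proof (cases "T \<le> t")
      case True
      with large[OF True \<open>0 < s\<close>] \<open>0 \<le> ?V T * ln (T / t\<^sub>0)\<close> show ?thesis
        by linarith
    next
      case False
      have "?V t * ln (T / t) \<le> ?V T * ln (T / t\<^sub>0)"
        using False \<open>t\<^sub>0 \<le> t\<close> \<open>0 < t\<^sub>0\<close>
        by (intro mult_mono po_pow_mono[OF np]) (auto simp: divide_left_mono)
      moreover have "ln (s / t) = ln (s / T) + ln (T / t)"
        using \<open>0 < s\<close> \<open>0 < t\<close> \<open>0 < T\<close> by (simp add: ln_div)
      ultimately show ?thesis
        using small[of t s] False \<open>0 < t\<close> \<open>0 < s\<close> by (simp add: distrib_left)
    qed
  qed
qed

lemma po_inv_power_le:
  assumes po: "proximate_order \<rho>r \<rho>" and np: "normalized_po \<rho>r" and "0 < K"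
  obtains \<sigma> c where "0 < \<sigma>"
    and "\<And>r l. 0 \<le> r \<Longrightarrow> 1 \<le> l \<Longrightarrow> (K * r / po_inv \<rho>r (real l)) ^ l \<le> exp (c + \<sigma> * r powr \<rho>r r)"
proof -
  let ?V = "\<lambda>r. r powr \<rho>r r"
  have "0 < \<rho>"
    using po by (simp add: proximate_order_def)
  obtain C\<^sub>1 where C\<^sub>1: "\<And>t s. po_inv \<rho>r 1 \<le> t \<Longrightarrow> 0 < s \<Longrightarrow> ?V t * ln (s / t) \<le> C\<^sub>1 + 2/\<rho> * ?V s"
    by (rule po_pow_log_ratio_le[OF po np po_inv_inverse(1)[OF po np zero_less_one]]) blast
  define k where "k = max 1 K"
  obtain C\<^sub>2 where C\<^sub>2: "\<And>r. 0 \<le> r \<Longrightarrow> ?V (k * r) \<le> C\<^sub>2 + k powr (3*\<rho>/2) * ?V r"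
    using po_pow_scale_le[OF po np, of k] by (auto simp: k_def)
  define \<sigma> where "\<sigma> = 2/\<rho> * k powr (3*\<rho>/2)"
  define c where "c = C\<^sub>1 + 2/\<rho> * C\<^sub>2"
  show thesis
  proof (rule that)
    show "0 < \<sigma>"
      using \<open>0 < \<rho>\<close> by (simp add: \<sigma>_def k_def)
    fix r :: real and l :: nat assume "0 \<le> r" "1 \<le> l"
    define t where "t = po_inv \<rho>r (real l)"
    have "0 < t" and "?V t = real l" and "po_inv \<rho>r 1 \<le> t"
      using po_inv_inverse[OF po np] po_inv_mono[OF po np] \<open>1 \<le> l\<close> by (auto simp: t_def)
    show "(K * r / t) ^ l \<le> exp (c + \<sigma> * ?V r)"
    proof (cases "r = 0")
      case False
      with \<open>0 \<le> r\<close> \<open>0 < K\<close> have "0 < K * r"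
        by simp
      have "?V (K * r) \<le> ?V (k * r)"
        using \<open>0 < K * r\<close> \<open>0 \<le> r\<close> by (intro po_pow_mono[OF np]) (auto simp: k_def mult_right_mono)
      also have "\<dots> \<le> C\<^sub>2 + k powr (3*\<rho>/2) * ?V r"
        using C\<^sub>2[OF \<open>0 \<le> r\<close>] .
      finally have "2/\<rho> * ?V (K * r) \<le> 2/\<rho> * (C\<^sub>2 + k powr (3*\<rho>/2) * ?V r)"
        using \<open>0 < \<rho>\<close> by (intro mult_left_mono) auto
      moreover have "real l * ln (K * r / t) \<le> C\<^sub>1 + 2/\<rho> * ?V (K * r)"
        using C\<^sub>1[OF \<open>po_inv \<rho>r 1 \<le> t\<close> \<open>0 < K * r\<close>] \<open>?V t = real l\<close> by simp
      ultimately have "real l * ln (K * r / t) \<le> c + \<sigma> * ?V r"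
        by (simp add: c_def \<sigma>_def algebra_simps)
      then have "ln ((K * r / t) ^ l) \<le> c + \<sigma> * ?V r"
        using \<open>0 < K * r\<close> \<open>0 < t\<close> by (simp add: ln_realpow)
      then show ?thesis
        using \<open>0 < K * r\<close> \<open>0 < t\<close> by (metis divide_pos_pos exp_le_cancel_iff exp_ln zero_less_power)
    qed (use \<open>1 \<le> l\<close> in \<open>simp add: power_0_left\<close>)
  qed
qed

section \<open>Growth conditions\<close>

definition finite_po_type :: "(real \<Rightarrow> real) \<Rightarrow> ('n::{finite,linorder} clif \<Rightarrow> 'n clif) \<Rightarrow> bool" where
  "finite_po_type \<rho>r f \<longleftrightarrow>
     (\<exists>\<sigma>>0. \<exists>C. \<forall>x. paravec x \<longrightarrow> norm (f x) \<le> C * exp (\<sigma> * norm x powr \<rho>r (norm x)))"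

lemma A_r_iff_finite_po_type:
  assumes "f \<in> SM_L"
  shows "f \<in> A_r \<rho>r \<longleftrightarrow> finite_po_type \<rho>r f"
proof -
  have "norm y * exp (- a) \<le> C \<longleftrightarrow> norm y \<le> C * exp a" for y :: "'a clif" and a C
    by (simp add: exp_minus field_simps)
  then show ?thesis
    using assms by (simp add: A_r_def A_rs_def finite_po_type_def Bex_def)
qed

lemma A_r_iff_Inf_type_finite:
  "f \<in> A_r \<rho>r \<longleftrightarrow> Inf (ereal ` {\<beta>. 0 < \<beta> \<and> f \<in> A_rs \<rho>r \<beta>}) < \<infinity>"
proof
  assume "f \<in> A_r \<rho>r"
  then obtain \<beta> where "0 < \<beta>" "f \<in> A_rs \<rho>r \<beta>"
    by (auto simp: A_r_def)
  then have "Inf (ereal ` {\<beta>. 0 < \<beta> \<and> f \<in> A_rs \<rho>r \<beta>}) \<le> ereal \<beta>"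
    by (intro Inf_lower) auto
  then show "Inf (ereal ` {\<beta>. 0 < \<beta> \<and> f \<in> A_rs \<rho>r \<beta>}) < \<infinity>"
    using order.strict_trans1 by fastforce
next
  assume finite: "Inf (ereal ` {\<beta>. 0 < \<beta> \<and> f \<in> A_rs \<rho>r \<beta>}) < \<infinity>"
  have "{\<beta>. 0 < \<beta> \<and> f \<in> A_rs \<rho>r \<beta>} \<noteq> {}"
  proof
    assume "{\<beta>. 0 < \<beta> \<and> f \<in> A_rs \<rho>r \<beta>} = {}"
    with finite show False
      by (simp add: top_ereal_def)
  qed
  then show "f \<in> A_r \<rho>r"
    by (auto simp: A_r_def)
qed

lemma finite_po_type_imp_Limsup_maxmod:
  assumes po: "proximate_order \<rho>r \<rho>" and np: "normalized_po \<rho>r" and "finite_po_type \<rho>r f"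
  shows "Limsup at_top (\<lambda>r. ereal (ln (maxmod f r) / r powr \<rho>r r)) < \<infinity>"
proof -
  obtain \<sigma> C where "0 < \<sigma>"
    and bound: "\<And>x. paravec x \<Longrightarrow> norm (f x) \<le> C * exp (\<sigma> * norm x powr \<rho>r (norm x))"
    using assms(3) by (auto simp: finite_po_type_def)
  have "norm (f 0) \<le> C"
    using bound[OF paravec_zero] by simp
  then have "0 \<le> C"
    using norm_ge_zero order_trans by blast
  have ball_bound: "norm (f y) \<le> C * exp (\<sigma> * r powr \<rho>r r)" if "paravec y" "norm y \<le> r" for y r
  proof -
    have "norm y powr \<rho>r (norm y) \<le> r powr \<rho>r r"
      using that by (intro po_pow_mono[OF np]) auto
    then have "C * exp (\<sigma> * norm y powr \<rho>r (norm y)) \<le> C * exp (\<sigma> * r powr \<rho>r r)"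
      using \<open>0 < \<sigma>\<close> \<open>0 \<le> C\<close> by (intro mult_left_mono) auto
    then show ?thesis
      using bound[OF \<open>paravec y\<close>] by linarith
  qed
  have "eventually (\<lambda>r. 1 \<le> r powr \<rho>r r) at_top"
    using po_pow_tendsto_at_top[OF po] by (simp add: filterlim_at_top)
  moreover have "eventually (\<lambda>r. 0 \<le> (r :: real)) at_top"
    by (rule eventually_ge_at_top)
  ultimately have "eventually (\<lambda>r. ln (maxmod f r) / r powr \<rho>r r \<le> \<bar>ln C\<bar> + \<sigma>) at_top"
  proof eventually_elim
    case (elim r)
    have "norm (f 0) \<le> maxmod f r"
      by (rule maxmod_upper[OF ball_bound paravec_zero]) (use elim in simp_all)
    then have "0 \<le> maxmod f r"
      using norm_ge_zero order_trans by blast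
    moreover have "maxmod f r \<le> C * exp (\<sigma> * r powr \<rho>r r)"
      by (rule maxmod_least[OF _ ball_bound]) (use elim in simp_all)
    ultimately show ?case
      using elim \<open>0 < \<sigma>\<close> by (intro ln_div_le_of_le_mult_exp) simp_all
  qed
  then show ?thesis
    by (subst Limsup_ereal_less_infinity_iff) blast
qed

lemma Limsup_maxmod_imp_finite_po_type:
  fixes a :: "nat \<Rightarrow> 'n::{finite,linorder} clif"
  assumes series: "paravec_power_series a f"
    and "Limsup at_top (\<lambda>r. ereal (ln (maxmod f r) / r powr \<rho>r r)) < \<infinity>"
  shows "finite_po_type \<rho>r f"
proof -
  obtain B where "eventually (\<lambda>r. ln (maxmod f r) / r powr \<rho>r r \<le> B) at_top"
    using assms(2) by (subst (asm) Limsup_ereal_less_infinity_iff) blast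
  then obtain R where R: "\<And>r. R \<le> r \<Longrightarrow> ln (maxmod f r) / r powr \<rho>r r \<le> B"
    by (auto simp: eventually_at_top_linorder)
  obtain M where M: "\<And>x. paravec x \<Longrightarrow> norm x \<le> max R 0 \<Longrightarrow> norm (f x) \<le> M"
    using paravec_power_series_bounded[OF series] by blast
  define \<sigma> where "\<sigma> = max 1 B"
  have "norm (f x) \<le> max 1 M * exp (\<sigma> * norm x powr \<rho>r (norm x))" if "paravec x" for x
  proof -
    define E where "E = exp (\<sigma> * norm x powr \<rho>r (norm x))"
    have "1 \<le> E"
      by (simp add: E_def \<sigma>_def)
    have "norm (f x) \<le> M" if "norm x \<le> max R 0"
      using M \<open>paravec x\<close> that by blast
    moreover have "norm (f x) \<le> E" if "max R 0 < norm x"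
    proof -
      have fx: "norm (f x) \<le> maxmod f (norm x)"
        using series \<open>paravec x\<close> by (rule paravec_power_series_norm_le_maxmod)
      show ?thesis
      proof (cases "0 < maxmod f (norm x)")
        case True
        have "ln (maxmod f (norm x)) \<le> B * norm x powr \<rho>r (norm x)"
          using R[of "norm x"] that by (simp add: divide_le_eq)
        also have "\<dots> \<le> \<sigma> * norm x powr \<rho>r (norm x)"
          by (intro mult_right_mono) (auto simp: \<sigma>_def)
        finally have "maxmod f (norm x) \<le> E"
          using True unfolding E_def by (metis exp_le_cancel_iff exp_ln)
        with fx show ?thesis
          by linarith
      qed (use fx \<open>1 \<le> E\<close> in linarith)
    qed
    moreover have "M \<le> max 1 M * E" "E \<le> max 1 M * E"
      using \<open>1 \<le> E\<close> mult_left_mono[of 1 E "max 1 M"] mult_right_mono[of 1 "max 1 M" E] by simp_all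
    ultimately show ?thesis
      unfolding E_def by (meson not_le order_trans)
  qed
  then show ?thesis
    unfolding finite_po_type_def \<sigma>_def by (intro exI[of _ "max 1 B"] conjI exI[of _ "max 1 M"]) auto
qed

lemma finite_po_type_imp_limsup_coeff:
  fixes a :: "nat \<Rightarrow> 'n::{finite,linorder} clif"
  assumes po: "proximate_order \<rho>r \<rho>" and np: "normalized_po \<rho>r"
    and series: "paravec_power_series a f" and "finite_po_type \<rho>r f"
  shows "limsup (\<lambda>l. ereal (norm (a l) powr (1 / real l) * po_inv \<rho>r (real l))) < \<infinity>"
proof -
  obtain \<sigma> C where bound: "\<And>x. paravec x \<Longrightarrow> norm (f x) \<le> C * exp (\<sigma> * norm x powr \<rho>r (norm x))"
    using assms(4) by (auto simp: finite_po_type_def)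
  define D where "D = real CARD('n set) * (2 * C)"
  have "norm (a l) powr (1 / real l) * po_inv \<rho>r (real l) \<le> max 1 D * exp \<sigma>" if "1 \<le> l" for l
  proof -
    define r where "r = po_inv \<rho>r (real l)"
    have "0 < r" and "r powr \<rho>r r = real l"
      using po_inv_inverse[OF po np] \<open>1 \<le> l\<close> by (auto simp: r_def)
    have "norm (f x) \<le> C * exp (\<sigma> * real l)" if "paravec x" "norm x = r" for x
      using bound[OF that(1)] that(2) \<open>r powr \<rho>r r = real l\<close> by simp
    then have "norm (a l) \<le> real CARD('n set) * (2 * (C * exp (\<sigma> * real l)) / r ^ l)"
      by (rule paravec_power_series_coeff_le[OF series \<open>0 < r\<close>])
    also have "\<dots> = D * (exp \<sigma> / r) ^ l"
      by (simp add: D_def power_divide exp_of_nat_mult[symmetric] mult.commute)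
    finally have "norm (a l) powr (1 / real l) \<le> max 1 D * (exp \<sigma> / r)"
      using \<open>0 < r\<close> \<open>1 \<le> l\<close> by (intro powr_inverse_le_of_le_power) auto
    then show ?thesis
      using \<open>0 < r\<close> by (simp add: r_def[symmetric] field_simps)
  qed
  then have "eventually (\<lambda>l. norm (a l) powr (1 / real l) * po_inv \<rho>r (real l) \<le> max 1 D * exp \<sigma>) sequentially"
    by (intro eventually_sequentiallyI[of 1]) simp
  then show ?thesis
    by (subst Limsup_ereal_less_infinity_iff) blast
qed

lemma coeff_power_bound_imp_finite_po_type:
  fixes a :: "nat \<Rightarrow> 'n::{finite,linorder} clif"
  assumes po: "proximate_order \<rho>r \<rho>" and np: "normalized_po \<rho>r"
    and series: "paravec_power_series a f" and "0 < K"
    and coeff: "\<And>l. 1 \<le> l \<Longrightarrow> norm (a l) \<le> (K / po_inv \<rho>r (real l)) ^ l"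
  shows "finite_po_type \<rho>r f"
proof -
  obtain B where "1 \<le> B"
    and B: "\<And>x :: 'n clif. \<And>l b. norm (cmul (cpow x l) b) \<le> B * (B * norm x) ^ l * norm b"
    using cmul_cpow_bound by blast
  obtain \<sigma> c where "0 < \<sigma>" and growth: "\<And>r l. 0 \<le> r \<Longrightarrow> 1 \<le> l \<Longrightarrow>
      (2 * B * K * r / po_inv \<rho>r (real l)) ^ l \<le> exp (c + \<sigma> * r powr \<rho>r r)"
    using po_inv_power_le[OF po np, of "2 * B * K"] \<open>1 \<le> B\<close> \<open>0 < K\<close> by auto
  define A where "A = B * (norm (a 0) + exp c)"
  have "norm (f x) \<le> 2 * A * exp (\<sigma> * norm x powr \<rho>r (norm x))" if "paravec x" for x
  proof -
    define E where "E = exp (\<sigma> * norm x powr \<rho>r (norm x))"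
    have "1 \<le> E"
      using \<open>0 < \<sigma>\<close> by (simp add: E_def)
    have "0 \<le> A"
      using \<open>1 \<le> B\<close> by (simp add: A_def)
    have terms: "norm (cmul (cpow x l) (a l)) \<le> A * E * (1/2) ^ l" for l
    proof (cases "l = 0")
      case True
      have "norm (cmul (cpow x 0) (a 0)) \<le> B * norm (a 0)"
        using B[of x 0 "a 0"] by simp
      also have "\<dots> \<le> A"
        using \<open>1 \<le> B\<close> by (simp add: A_def mult_left_mono)
      also have "\<dots> \<le> A * E"
        using \<open>0 \<le> A\<close> \<open>1 \<le> E\<close> mult_left_mono[of 1 E A] by simp
      finally show ?thesis
        using True by simp
    next
      case False
      then have "1 \<le> l"
        by simp
      have "norm (cmul (cpow x l) (a l)) \<le> B * (B * norm x) ^ l * norm (a l)"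
        by (rule B)
      also have "\<dots> \<le> B * (B * norm x) ^ l * (K / po_inv \<rho>r (real l)) ^ l"
        using coeff[OF \<open>1 \<le> l\<close>] \<open>1 \<le> B\<close> by (intro mult_left_mono) auto
      also have "\<dots> = B * (1/2) ^ l * (2 * B * K * norm x / po_inv \<rho>r (real l)) ^ l"
        by (simp add: field_simps)
      also have "\<dots> \<le> B * (1/2) ^ l * (exp c * E)"
        using growth[OF norm_ge_zero \<open>1 \<le> l\<close>, of x] \<open>1 \<le> B\<close>
        by (intro mult_left_mono) (simp_all add: E_def exp_add)
      also have "\<dots> \<le> A * E * (1/2) ^ l"
        using \<open>1 \<le> B\<close> \<open>1 \<le> E\<close> by (simp add: A_def field_simps mult_right_mono)
      finally show ?thesis .
    qed
    have "(\<lambda>l. cmul (cpow x l) (a l)) sums f x"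
      using series \<open>paravec x\<close> by (simp add: paravec_power_series_def)
    then have "norm (f x) \<le> 2 * (A * E)"
      using terms by (rule norm_sums_le_geometric)
    then show ?thesis
      by (simp add: E_def mult.assoc)
  qed
  then show ?thesis
    unfolding finite_po_type_def using \<open>0 < \<sigma>\<close> by blast
qed

lemma limsup_coeff_imp_finite_po_type:
  fixes a :: "nat \<Rightarrow> 'n::{finite,linorder} clif"
  assumes po: "proximate_order \<rho>r \<rho>" and np: "normalized_po \<rho>r"
    and series: "paravec_power_series a f"
    and "limsup (\<lambda>l. ereal (norm (a l) powr (1 / real l) * po_inv \<rho>r (real l))) < \<infinity>"
  shows "finite_po_type \<rho>r f"
proof -
  obtain K\<^sub>0 where "eventually (\<lambda>l. norm (a l) powr (1 / real l) * po_inv \<rho>r (real l) \<le> K\<^sub>0) sequentially"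
    using assms(4) by (subst (asm) Limsup_ereal_less_infinity_iff) blast
  then obtain K' where K': "\<And>l. norm (a l) powr (1 / real l) * po_inv \<rho>r (real l) \<le> K'"
    by (rule eventually_sequentially_le_imp_bounded) blast
  define K where "K = max 1 K'"
  show ?thesis
  proof (rule coeff_power_bound_imp_finite_po_type[OF po np series])
    show "0 < K"
      by (simp add: K_def)
    show "norm (a l) \<le> (K / po_inv \<rho>r (real l)) ^ l" if "1 \<le> l" for l
    proof (rule le_power_of_powr_inverse_le[OF norm_ge_zero that])
      have "0 < po_inv \<rho>r (real l)"
        using po_inv_inverse(1)[OF po np] that by simp
      then show "norm (a l) powr (1 / real l) \<le> K / po_inv \<rho>r (real l)"
        using K'[of l] by (simp add: K_def le_divide_eq)
    qed
  qed
qed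

theorem proposition3p9:
  fixes \<rho>r :: "real \<Rightarrow> real" and \<rho> :: real
    and f :: "'n::{finite,linorder} clif \<Rightarrow> 'n clif" and a :: "nat \<Rightarrow> 'n clif"
  assumes "proximate_order \<rho>r \<rho>" and "normalized_po \<rho>r"
    and "f \<in> SM_L"
    and "\<forall>x. paravec x \<longrightarrow> (\<lambda>l. cmul (cpow x l) (a l)) sums f x"
  shows "(f \<in> A_r \<rho>r \<longleftrightarrow>
            Limsup at_top (\<lambda>r. ereal (ln (maxmod f r) / r powr \<rho>r r)) < \<infinity>) \<and>
         (f \<in> A_r \<rho>r \<longleftrightarrow>
            limsup (\<lambda>l. ereal (norm (a l) powr (1 / real l) * po_inv \<rho>r (real l))) < \<infinity>) \<and>
         (f \<in> A_r \<rho>r \<longleftrightarrow>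
            Inf (ereal ` {\<beta>. 0 < \<beta> \<and> f \<in> A_rs \<rho>r \<beta>}) < \<infinity>)"
proof -
  note po = assms(1) and np = assms(2)
  have series: "paravec_power_series a f"
    using assms(4) by (simp add: paravec_power_series_def)
  have "f \<in> A_r \<rho>r \<longleftrightarrow> finite_po_type \<rho>r f"
    by (rule A_r_iff_finite_po_type[OF assms(3)])
  then show ?thesis
    using finite_po_type_imp_Limsup_maxmod[OF po np] Limsup_maxmod_imp_finite_po_type[OF series]
      finite_po_type_imp_limsup_coeff[OF po np series] limsup_coeff_imp_finite_po_type[OF po np series]
      A_r_iff_Inf_type_finite
    by blast
qed

end
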